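(* For $t>0$, $a\ge0$ and $r>0$, $$\Big|\int_r^\infty\frac{e^{i\frac{(s+a)^2}{4t}}(s+a)}{\sqrt{\cosh s-\cosh r}}\,ds\Big|\lesssim\begin{cases}\sqrt t\sqrt{\dfrac{r+a}{\sinh r}},& r\ge\frac{\sqrt t}{2},\\[2mm] \sqrt t\,(1+\frac ar),& r<\frac{\sqrt t}{2},\end{cases}$$ with implicit constants independent of $t,a,r$. *)

theory Defs
  imports "HOL-Analysis.Analysis"
begin

end

theory Submission
  imports Defs
begin

text \<open>Split the integral at \<open>r + d\<close>. On \<open>(r, r + d]\<close> the integrand is bounded in modulus by
  \<open>P / sqrt (s - r)\<close>, using \<open>cosh s - cosh r \<ge> sinh r (s - r)\<close> or \<open>\<ge> (s\<^sup>2 - r\<^sup>2) / 2\<close>, so this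
  part is at most \<open>2 P sqrt d\<close>. On \<open>[r + d, \<infinity>)\<close> the factor \<open>(s + a) exp (i (s + a)\<^sup>2 / (4 t))\<close>
  is \<open>-2 i t\<close> times the \<open>s\<close>-derivative of \<open>exp (i (s + a)\<^sup>2 / (4 t))\<close>, and one integration by parts against the
  decreasing weight \<open>1 / sqrt (cosh s - cosh r)\<close> bounds this part by
  \<open>4 t / sqrt (cosh (r + d) - cosh r)\<close>. Taking \<open>d = t / (r + a)\<close> for \<open>r \<ge> sqrt t / 2\<close> and
  \<open>d = sqrt t\<close> otherwise gives the two bounds.\<close>

lemma has_vector_derivative_exp_i_quadratic:
  fixes t a s :: real
  assumes "t \<noteq> 0"
  shows "((\<lambda>s. exp (\<i> * complex_of_real ((s + a)\<^sup>2 / (4 * t)))) has_vector_derivative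
      \<i> * complex_of_real ((s + a) / (2 * t)) * exp (\<i> * complex_of_real ((s + a)\<^sup>2 / (4 * t))))
    (at s within S)"
proof -
  have "((\<lambda>z. exp (\<i> * ((z + of_real a)\<^sup>2 / (4 * of_real t)))) has_field_derivative
      \<i> * ((of_real s + of_real a) / (2 * of_real t)) * exp (\<i> * ((of_real s + of_real a)\<^sup>2 / (4 * of_real t))))
    (at (of_real s))"
    using assms by (auto intro!: derivative_eq_intros simp: field_simps power2_eq_square)
  from has_vector_derivative_real_field[OF this, of S] show ?thesis by simp
qed

lemma cosh_diff_pos:
  fixes r s :: real
  assumes "0 \<le> r" "r < s"
  shows "cosh s - cosh r > 0"
  using cosh_real_strict_mono[OF assms] by simp

lemma cosh_diff_ge_sinh_mult:
  fixes r s :: real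
  assumes "0 \<le> r" "r \<le> s"
  shows "sinh r * (s - r) \<le> cosh s - cosh r"
proof (cases "r = s")
  case False
  then have "r < s" using assms by simp
  then have "\<exists>z>r. z < s \<and> cosh s - cosh r = (s - r) * sinh z"
    by (intro MVT2) (auto intro!: derivative_eq_intros)
  then obtain z where z: "r < z" "z < s" "cosh s - cosh r = (s - r) * sinh z" by blast
  then have "sinh r \<le> sinh z" by simp
  with z show ?thesis by (simp add: mult.commute mult_left_mono)
qed simp

lemma cosh_diff_ge_square_diff:
  fixes r s :: real
  assumes "0 \<le> r" "r \<le> s"
  shows "(s\<^sup>2 - r\<^sup>2) / 2 \<le> cosh s - cosh r"
proof (cases "r = s")
  case False
  then have "r < s" using assms by simp
  then have "\<exists>z>r. z < s \<and> (cosh s - s\<^sup>2 / 2) - (cosh r - r\<^sup>2 / 2) = (s - r) * (sinh z - z)"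
    by (intro MVT2) (auto intro!: derivative_eq_intros)
  then obtain z where z: "r < z" "z < s"
      "(cosh s - s\<^sup>2 / 2) - (cosh r - r\<^sup>2 / 2) = (s - r) * (sinh z - z)" by blast
  have "z \<le> sinh z"
    using real_le_x_sinh[of z] z assms by (simp add: sinh_field_def exp_minus)
  with \<open>r < s\<close> have "0 \<le> (s - r) * (sinh z - z)" by simp
  with z show ?thesis by simp
qed simp

lemma integral_deriv_mult_decreasing_le:
  fixes E :: "real \<Rightarrow> complex" and G G' :: "real \<Rightarrow> real"
  assumes AB: "A \<le> B"
    and E: "\<And>x. x \<in> {A..B} \<Longrightarrow> (E has_vector_derivative E' x) (at x)"
    and E_le: "\<And>x. x \<in> {A..B} \<Longrightarrow> norm (E x) \<le> 1"
    and G: "\<And>x. x \<in> {A..B} \<Longrightarrow> (G has_real_derivative G' x) (at x)"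
    and G'_cont: "continuous_on {A..B} G'"
    and G'_le: "\<And>x. x \<in> {A..B} \<Longrightarrow> G' x \<le> 0"
    and G_nonneg: "0 \<le> G B"
  shows "(\<lambda>x. E' x * of_real (G x)) integrable_on {A..B}"
    and "norm (integral {A..B} (\<lambda>x. E' x * of_real (G x))) \<le> 2 * G A"
proof -
  have E_cont: "continuous_on {A..B} E"
    using E by (meson continuous_at_imp_continuous_on has_vector_derivative_continuous)
  have G_vec: "x \<in> {A..B} \<Longrightarrow> ((\<lambda>x. of_real (G x) :: complex) has_vector_derivative of_real (G' x)) (at x)" for x
    using G by (intro has_vector_derivative_of_real) (simp add: has_real_derivative_iff_has_vector_derivative)
  then have G_cont: "continuous_on {A..B} (\<lambda>x. of_real (G x) :: complex)"
    by (meson continuous_at_imp_continuous_on has_vector_derivative_continuous)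
  define J where "J = integral {A..B} (\<lambda>x. E x * of_real (G' x))"
  have int: "(\<lambda>x. E x * of_real (G' x)) integrable_on {A..B}"
    by (intro integrable_continuous_interval continuous_intros E_cont G'_cont)
  have "((\<lambda>x. E x * of_real (G' x)) has_integral
      E B * of_real (G B) - E A * of_real (G A) - (E B * of_real (G B) - E A * of_real (G A) - J)) {A..B}"
    using integrable_integral[OF int] by (simp add: J_def)
  from integration_by_parts[OF bounded_bilinear_mult AB E_cont G_cont E G_vec this]
  have parts: "((\<lambda>x. E' x * of_real (G x)) has_integral E B * of_real (G B) - E A * of_real (G A) - J) {A..B}" .
  then show "(\<lambda>x. E' x * of_real (G x)) integrable_on {A..B}" by blast
  have I: "integral {A..B} (\<lambda>x. E' x * of_real (G x)) = E B * of_real (G B) - E A * of_real (G A) - J"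
    using parts by (rule integral_unique)
  have ftc: "(G' has_integral (G B - G A)) {A..B}"
    by (rule fundamental_theorem_of_calculus[OF AB])
       (use G in \<open>auto simp: has_real_derivative_iff_has_vector_derivative has_vector_derivative_at_within\<close>)
  have "norm J \<le> integral {A..B} (\<lambda>x. - G' x)"
    unfolding J_def using ftc E_le G'_le
    by (intro integral_norm_bound_integral int)
       (auto simp: norm_mult intro!: integrable_neg, metis mult_1 mult_right_mono_neg)
  also have "\<dots> = G A - G B" using ftc by (simp add: integral_unique)
  finally have J_le: "norm J \<le> G A - G B" .
  have "0 \<le> G A" using J_le G_nonneg norm_ge_zero[of J] by linarith
  then have "norm (E A * of_real (G A)) \<le> G A" "norm (E B * of_real (G B)) \<le> G B"
    using G_nonneg E_le[of A] E_le[of B] AB by (auto simp: norm_mult intro!: mult_left_le_one_le)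
  with J_le show "norm (integral {A..B} (\<lambda>x. E' x * of_real (G x))) \<le> 2 * G A"
    unfolding I using norm_triangle_ineq4 norm_triangle_ineq by (smt (verit, best))
qed

lemma integral_atLeast_norm_le_truncations:
  fixes f :: "real \<Rightarrow> 'a::euclidean_space"
  assumes f_cont: "continuous_on {A..} f"
    and h: "h integrable_on {A..}" and f_le: "\<And>x. A \<le> x \<Longrightarrow> norm (f x) \<le> h x"
    and truncations: "\<And>B. A \<le> B \<Longrightarrow> norm (integral {A..B} f) \<le> M"
  shows "f integrable_on {A..}" and "norm (integral {A..} f) \<le> M"
proof -
  define f_cut where "f_cut k x = (if x \<in> {A..A + real k} then f x else 0)" for k :: nat and x
  have "f integrable_on {A..A + real k}" for k
    by (rule integrable_continuous_interval) (auto intro: continuous_on_subset[OF f_cont])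
  then have cut: "(f_cut k has_integral integral {A..A + real k} f) {A..}" for k
    unfolding f_cut_def by (subst has_integral_restrict) auto
  have conv: "(\<lambda>k. f_cut k x) \<longlonglongrightarrow> f x" if "x \<in> {A..}" for x
  proof (rule tendsto_eventually)
    show "\<forall>\<^sub>F k in sequentially. f_cut k x = f x"
      using eventually_ge_at_top[of "nat \<lceil>x - A\<rceil>"]
      by eventually_elim (use real_nat_ceiling_ge[of "x - A"] that in \<open>auto simp: f_cut_def\<close>)
  qed
  have le: "norm (f_cut k x) \<le> h x" if "x \<in> {A..}" for k x
    using f_le[of x] order_trans[OF norm_ge_zero f_le[of x]] that by (auto simp: f_cut_def)
  note dc = dominated_convergence[of f_cut "{A..}" h f, OF _ h le conv]
  show "f integrable_on {A..}" using dc(1) cut by blast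
  have "integral {A..} (f_cut k) = integral {A..A + real k} f" for k
    using cut[of k] by (rule integral_unique)
  then have lim: "(\<lambda>k. integral {A..A + real k} f) \<longlonglongrightarrow> integral {A..} f"
    using dc(2) cut by auto
  show "norm (integral {A..} f) \<le> M"
    by (rule Lim_norm_ubound[OF _ lim]) (simp_all add: truncations)
qed

lemma has_integral_inverse_sqrt:
  fixes r d P :: real
  assumes "0 < d"
  shows "((\<lambda>s. P / sqrt (s - r)) has_integral 2 * P * sqrt d) {r<..r + d}"
proof -
  have "((\<lambda>s. P / sqrt (s - r)) has_integral 2 * P * sqrt (r + d - r) - 2 * P * sqrt (r - r)) {r..r + d}"
  proof (rule fundamental_theorem_of_calculus_interior)
    fix x assume "x \<in> {r<..<r + d}"
    then have "((\<lambda>s. 2 * P * sqrt (s - r)) has_real_derivative P / sqrt (x - r)) (at x)"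
      by (auto intro!: derivative_eq_intros simp: field_simps)
    then show "((\<lambda>s. 2 * P * sqrt (s - r)) has_vector_derivative P / sqrt (x - r)) (at x)"
      by (simp add: has_real_derivative_iff_has_vector_derivative)
  qed (use assms in \<open>auto intro!: continuous_intros\<close>)
  then have "((\<lambda>s. P / sqrt (s - r)) has_integral 2 * P * sqrt d) {r..r + d}" by simp
  moreover have "negligible {x \<in> {r..r + d} - {r<..r + d}. P / sqrt (x - r) \<noteq> 0}"
    by (rule negligible_subset[of "{r}"]) auto
  moreover have "negligible {x \<in> {r<..r + d} - {r..r + d}. P / sqrt (x - r) \<noteq> 0}"
    by (rule negligible_subset[of "{}"]) auto
  ultimately show ?thesis
    using has_integral_spike_set_eq[of "{r..r + d}" "{r<..r + d}" "\<lambda>s. P / sqrt (s - r)"] by simp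
qed

lemma integral_norm_le_inverse_sqrt:
  fixes f :: "real \<Rightarrow> 'a::euclidean_space"
  assumes "continuous_on {r<..r + d} f" and "0 < d"
    and f_le: "\<And>s. r < s \<Longrightarrow> s \<le> r + d \<Longrightarrow> norm (f s) \<le> P / sqrt (s - r)"
  shows "f integrable_on {r<..r + d}" and "norm (integral {r<..r + d} f) \<le> 2 * P * sqrt d"
proof -
  have meas: "f \<in> borel_measurable (lebesgue_on {r<..r + d})"
    using assms(1) by (rule continuous_imp_measurable_on_sets_lebesgue) simp
  note majorant = has_integral_inverse_sqrt[OF \<open>0 < d\<close>, of P r]
  show "f integrable_on {r<..r + d}"
    by (rule measurable_bounded_by_integrable_imp_integrable[OF meas]) (use majorant f_le in auto)
  show "norm (integral {r<..r + d} f) \<le> 2 * P * sqrt d"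
    by (rule integral_norm_bound_integral'[OF _ meas _ majorant]) (use f_le in auto)
qed

definition osc_kernel :: "real \<Rightarrow> real \<Rightarrow> real \<Rightarrow> real \<Rightarrow> complex" where
  "osc_kernel t a r s =
    exp (\<i> * complex_of_real ((s + a)\<^sup>2 / (4 * t))) * complex_of_real ((s + a) / sqrt (cosh s - cosh r))"

lemma norm_osc_kernel:
  assumes "0 \<le> r" "r < s" "0 \<le> a"
  shows "norm (osc_kernel t a r s) = (s + a) / sqrt (cosh s - cosh r)"
  using assms cosh_diff_pos[OF assms(1,2)]
  by (simp only: osc_kernel_def norm_mult norm_exp_i_times norm_of_real mult_1_left) simp

lemma continuous_on_osc_kernel:
  assumes "0 < t" "0 \<le> r" "S \<subseteq> {r<..}"
  shows "continuous_on S (osc_kernel t a r)"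
proof -
  have "sqrt (cosh x - cosh r) \<noteq> 0" if "x \<in> S" for x
    using cosh_diff_pos[of r x] assms that by auto
  then show ?thesis unfolding osc_kernel_def using assms(1) by (auto intro!: continuous_intros)
qed

lemma osc_kernel_integral_atLeastAtMost_le:
  assumes "0 < t" "0 \<le> r" "r < A" "A \<le> B"
  shows "norm (integral {A..B} (osc_kernel t a r)) \<le> 4 * t / sqrt (cosh A - cosh r)"
proof -
  define E where "E s = exp (\<i> * complex_of_real ((s + a)\<^sup>2 / (4 * t)))" for s
  define E' where "E' s = \<i> * complex_of_real ((s + a) / (2 * t)) * E s" for s
  define G where "G s = 1 / sqrt (cosh s - cosh r)" for s
  define G' where "G' s = - sinh s / (2 * (cosh s - cosh r) * sqrt (cosh s - cosh r))" for s
  have pos: "x \<in> {A..B} \<Longrightarrow> 0 < cosh x - cosh r" for x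
    using cosh_diff_pos[of r x] assms by auto
  have "x \<in> {A..B} \<Longrightarrow> (G has_real_derivative G' x) (at x)" for x
    using pos[of x] assms unfolding G_def G'_def
    by (auto intro!: derivative_eq_intros simp: field_simps)
  moreover have "x \<in> {A..B} \<Longrightarrow> G' x \<le> 0" for x
    using pos[of x] assms unfolding G'_def by (auto intro!: divide_nonneg_pos)
  moreover have "continuous_on {A..B} G'"
    unfolding G'_def using pos assms by (auto intro!: continuous_intros)
  moreover have "(E has_vector_derivative E' x) (at x)" for x
    unfolding E_def E'_def using has_vector_derivative_exp_i_quadratic[of t a x UNIV] assms by simp
  moreover have "norm (E x) \<le> 1" for x unfolding E_def by (simp add: norm_exp_i_times)
  moreover have "0 \<le> G B" unfolding G_def using pos[of B] assms by simp
  ultimately have bound: "norm (integral {A..B} (\<lambda>x. E' x * of_real (G x))) \<le> 2 * G A"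
    using integral_deriv_mult_decreasing_le(2)[of A B E E' G G'] assms by blast
  have "osc_kernel t a r = (\<lambda>x. (- 2 * t * \<i>) * (E' x * of_real (G x)))"
  proof
    fix x
    define q where "q = sqrt (cosh x - cosh r)"
    show "osc_kernel t a r x = (- 2 * t * \<i>) * (E' x * of_real (G x))"
      unfolding osc_kernel_def E'_def E_def G_def q_def[symmetric] using assms
      by (cases "q = 0") (simp_all add: field_simps)
  qed
  then have "norm (integral {A..B} (osc_kernel t a r))
      = 2 * t * norm (integral {A..B} (\<lambda>x. E' x * of_real (G x)))"
    using assms by (simp only: integral_mult_right norm_mult) (simp add: norm_mult)
  also have "\<dots> \<le> 2 * t * (2 * G A)"
    using bound assms by simp
  finally show ?thesis by (simp add: G_def)
qed

lemma osc_kernel_exp_decay: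
  assumes "0 \<le> r" "r < A" "0 \<le> a"
  obtains M where "\<And>x. A \<le> x \<Longrightarrow> norm (osc_kernel t a r x) \<le> M * exp (- x / 4)"
proof
  define c where "c = 1 - cosh r / cosh A"
  have "cosh r < cosh A" using cosh_real_strict_mono assms by simp
  then have c: "0 < c" by (simp add: c_def field_simps)
  define K where "K = 32 * exp (a / 2) / c"
  fix x assume "A \<le> x"
  then have D: "0 < cosh x - cosh r" and xa: "0 \<le> x + a"
    using cosh_diff_pos[of r x] assms by auto
  have "cosh r / cosh A * cosh A \<le> cosh r / cosh A * cosh x"
    using \<open>A \<le> x\<close> assms by (intro mult_left_mono) (auto simp: cosh_real_nonneg_le_iff)
  then have "c * cosh x \<le> cosh x - cosh r" by (simp add: c_def algebra_simps)
  moreover have "c * (exp x / 2) \<le> c * cosh x"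
    using c by (intro mult_left_mono) (simp_all add: cosh_def)
  ultimately have D_ge: "c * (exp x / 2) \<le> cosh x - cosh r" by linarith
  have "y \<le> 4 * exp (y / 4)" for y :: real
    using exp_ge_add_one_self[of "y / 4"] by linarith
  then have "x + a \<le> 4 * exp ((x + a) / 4)" .
  then have "(x + a)\<^sup>2 \<le> (4 * exp ((x + a) / 4))\<^sup>2"
    using xa by (rule power_mono)
  also have "\<dots> = K * exp (- x / 2) * (c * (exp x / 2))"
    using c by (simp add: K_def power2_eq_square field_simps flip: exp_add)
  also have "\<dots> \<le> K * exp (- x / 2) * (cosh x - cosh r)"
    using D_ge c by (intro mult_left_mono) (simp_all add: K_def)
  also have "\<dots> = (sqrt K * exp (- x / 4) * sqrt (cosh x - cosh r))\<^sup>2"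
  proof -
    have "(exp (- x / 4))\<^sup>2 = exp (- x / 2)" by (simp add: power2_eq_square flip: exp_add)
    moreover have "0 \<le> K" using c by (simp add: K_def)
    ultimately show ?thesis using D by (simp add: power_mult_distrib)
  qed
  finally have "x + a \<le> sqrt K * exp (- x / 4) * sqrt (cosh x - cosh r)"
    by (rule power2_le_imp_le) (use c D in \<open>simp add: K_def\<close>)
  then show "norm (osc_kernel t a r x) \<le> sqrt K * exp (- x / 4)"
    using D assms \<open>A \<le> x\<close> by (simp add: norm_osc_kernel divide_le_eq)
qed

lemma osc_kernel_tail:
  assumes "0 < t" "0 \<le> r" "r < A" "0 \<le> a"
  shows "osc_kernel t a r integrable_on {A..}"
    and "norm (integral {A..} (osc_kernel t a r)) \<le> 4 * t / sqrt (cosh A - cosh r)"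
proof -
  obtain M where M: "\<And>x. A \<le> x \<Longrightarrow> norm (osc_kernel t a r x) \<le> M * exp (- x / 4)"
    using osc_kernel_exp_decay assms(2-4) by blast
  have "(\<lambda>x. M * exp (- x / 4)) integrable_on {A..}"
    using integrable_on_cmult_left[OF integrable_on_exp_minus_to_infinity[of "1 / 4" A], of M] by simp
  moreover have "continuous_on {A..} (osc_kernel t a r)"
    using assms by (intro continuous_on_osc_kernel) auto
  ultimately show "osc_kernel t a r integrable_on {A..}"
    and "norm (integral {A..} (osc_kernel t a r)) \<le> 4 * t / sqrt (cosh A - cosh r)"
    using integral_atLeast_norm_le_truncations M osc_kernel_integral_atLeastAtMost_le[OF assms(1-3)] by blast+
qed

lemma osc_kernel_integral_greaterThan_le:
  assumes "0 < t" "0 \<le> r" "0 < d" "0 \<le> a"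
    and near: "\<And>s. r < s \<Longrightarrow> s \<le> r + d \<Longrightarrow> norm (osc_kernel t a r s) \<le> P / sqrt (s - r)"
  shows "norm (integral {r<..} (osc_kernel t a r))
    \<le> 2 * P * sqrt d + 4 * t / sqrt (cosh (r + d) - cosh r)"
proof -
  have "continuous_on {r<..r + d} (osc_kernel t a r)"
    using assms by (intro continuous_on_osc_kernel) auto
  note head = integral_norm_le_inverse_sqrt[OF this \<open>0 < d\<close> near]
  note tail = osc_kernel_tail[of t r "r + d" a]
  have "negligible ({r<..r + d} \<inter> {r + d..})"
    by (rule negligible_subset[of "{r + d}"]) auto
  then have "(osc_kernel t a r has_integral
      integral {r<..r + d} (osc_kernel t a r) + integral {r + d..} (osc_kernel t a r)) ({r<..r + d} \<union> {r + d..})"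
    using head(1) tail(1) assms by (intro has_integral_Un) auto
  moreover have "{r<..r + d} \<union> {r + d..} = {r<..}" using assms by auto
  ultimately have "integral {r<..} (osc_kernel t a r)
      = integral {r<..r + d} (osc_kernel t a r) + integral {r + d..} (osc_kernel t a r)"
    by (simp add: integral_unique)
  then show ?thesis
    using norm_triangle_ineq head(2) tail(2) assms by (smt (verit))
qed

lemma norm_osc_kernel_le_sinh:
  assumes "0 < r" "r < s" "0 \<le> a"
  shows "norm (osc_kernel t a r s) \<le> (s + a) / (sqrt (sinh r) * sqrt (s - r))"
proof -
  have le: "sqrt (sinh r) * sqrt (s - r) \<le> sqrt (cosh s - cosh r)"
    using cosh_diff_ge_sinh_mult[of r s] assms by (simp flip: real_sqrt_mult)
  have "norm (osc_kernel t a r s) = (s + a) / sqrt (cosh s - cosh r)"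
    using assms by (simp add: norm_osc_kernel)
  also have "\<dots> \<le> (s + a) / (sqrt (sinh r) * sqrt (s - r))"
    by (rule divide_left_mono[OF le]) (use assms le cosh_diff_pos[of r s] in \<open>auto intro!: mult_pos_pos\<close>)
  finally show ?thesis .
qed

lemma norm_osc_kernel_le_sqrt_sum:
  assumes "0 < r" "r < s" "0 \<le> a"
  shows "norm (osc_kernel t a r s) \<le> sqrt 2 * (sqrt (s + r) + a / sqrt r) / sqrt (s - r)"
proof -
  have "(s + r) * (s - r) / 2 \<le> cosh s - cosh r"
    using cosh_diff_ge_square_diff[of r s] assms by (simp add: power2_eq_square algebra_simps)
  then have le: "sqrt ((s + r) * (s - r) / 2) \<le> sqrt (cosh s - cosh r)"
    by (rule real_sqrt_le_mono)
  have "s / sqrt (s + r) \<le> (s + r) / sqrt (s + r)"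
    using assms by (intro divide_right_mono) auto
  also have "\<dots> = sqrt (s + r)" using assms by (simp add: real_div_sqrt)
  finally have "s / sqrt (s + r) \<le> sqrt (s + r)" .
  moreover have "a / sqrt (s + r) \<le> a / sqrt r"
    using assms by (intro divide_left_mono) auto
  ultimately have sum_le: "(s + a) / sqrt (s + r) \<le> sqrt (s + r) + a / sqrt r"
    by (simp add: add_divide_distrib)
  have "norm (osc_kernel t a r s) = (s + a) / sqrt (cosh s - cosh r)"
    using assms by (simp add: norm_osc_kernel)
  also have "\<dots> \<le> (s + a) / sqrt ((s + r) * (s - r) / 2)"
    by (rule divide_left_mono[OF le]) (use assms le cosh_diff_pos[of r s] in \<open>auto intro!: mult_pos_pos\<close>)
  also have "\<dots> = sqrt 2 * ((s + a) / sqrt (s + r)) / sqrt (s - r)"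
    by (simp add: real_sqrt_mult real_sqrt_divide)
  also have "\<dots> \<le> sqrt 2 * (sqrt (s + r) + a / sqrt r) / sqrt (s - r)"
    using sum_le assms by (intro divide_right_mono mult_left_mono) auto
  finally show ?thesis .
qed

text \<open>The cut \<open>d = t / (r + a)\<close> is the length over which the phase \<open>(s + a)\<^sup>2 / (4 t)\<close> changes
  by about \<open>1/2\<close> near \<open>s = r\<close>.\<close>

lemma osc_kernel_integral_le_large_r:
  assumes t: "0 < t" and r: "0 < r" and a: "0 \<le> a" and large: "sqrt t / 2 \<le> r"
  shows "norm (integral {r<..} (osc_kernel t a r)) \<le> 14 * (sqrt t * sqrt ((r + a) / sinh r))"
proof -
  define u where "u = r + a"
  define S where "S = sinh r"
  define d where "d = t / u"
  define W where "W = sqrt t * sqrt u / sqrt S"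
  have u: "0 < u" and S: "0 < S" and d: "0 < d"
    using t r a by (simp_all add: u_def S_def d_def)
  have "sqrt t \<le> 2 * u" using large a by (simp add: u_def)
  then have "(sqrt t)\<^sup>2 \<le> (2 * u)\<^sup>2" by (rule power_mono) (use t in simp)
  then have "d \<le> 4 * u" using t u by (simp add: d_def divide_le_eq power2_eq_square)
  have near: "norm (osc_kernel t a r s) \<le> ((u + d) / sqrt S) / sqrt (s - r)"
    if "r < s" "s \<le> r + d" for s
  proof -
    have "norm (osc_kernel t a r s) \<le> (s + a) / (sqrt S * sqrt (s - r))"
      using norm_osc_kernel_le_sinh[of r s a t] that r a by (simp add: S_def)
    also have "\<dots> \<le> (u + d) / (sqrt S * sqrt (s - r))"
      using that S by (intro divide_right_mono) (auto simp: u_def)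
    finally show ?thesis by simp
  qed
  have "2 * ((u + d) / sqrt S) * sqrt d \<le> 2 * (5 * u / sqrt S) * sqrt d"
    using \<open>d \<le> 4 * u\<close> S d by (intro mult_right_mono mult_left_mono divide_right_mono) auto
  also have "\<dots> = 10 * (u / sqrt u) * sqrt t / sqrt S"
    using u S by (simp add: d_def real_sqrt_divide field_simps)
  also have "\<dots> = 10 * W"
    using u by (simp add: W_def real_div_sqrt)
  finally have head: "2 * ((u + d) / sqrt S) * sqrt d \<le> 10 * W" .
  have "S * d \<le> cosh (r + d) - cosh r"
    using cosh_diff_ge_sinh_mult[of r "r + d"] r d by (simp add: S_def)
  then have "4 * t / sqrt (cosh (r + d) - cosh r) \<le> 4 * t / sqrt (S * d)"
    using t S d cosh_diff_pos[of r "r + d"] r by (intro divide_left_mono mult_pos_pos) auto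
  also have "\<dots> = 4 * (t / sqrt t) * sqrt u / sqrt S"
    using t u S by (simp add: d_def real_sqrt_mult real_sqrt_divide field_simps)
  also have "\<dots> = 4 * W"
    using t by (simp add: W_def real_div_sqrt)
  finally have tail: "4 * t / sqrt (cosh (r + d) - cosh r) \<le> 4 * W" .
  have "sqrt t * sqrt ((r + a) / sinh r) = W"
    by (simp add: W_def u_def S_def real_sqrt_divide)
  then show ?thesis
    using osc_kernel_integral_greaterThan_le[OF t _ d a near] r head tail by simp
qed

lemma osc_kernel_integral_le_small_r:
  assumes t: "0 < t" and r: "0 < r" and a: "0 \<le> a" and small: "r < sqrt t / 2"
  shows "norm (integral {r<..} (osc_kernel t a r)) \<le> 14 * (sqrt t * (1 + a / r))"
proof -
  define w where "w = sqrt t"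
  define P where "P = sqrt 2 * (sqrt (2 * w) + a / sqrt r)"
  have w: "0 < w" and rw: "2 * r < w" using t small by (simp_all add: w_def)
  have sqrt2: "sqrt 2 \<le> (2::real)"
    using real_sqrt_le_mono[of 2 4] by simp
  have near: "norm (osc_kernel t a r s) \<le> P / sqrt (s - r)" if "r < s" "s \<le> r + w" for s
  proof -
    have "sqrt 2 * (sqrt (s + r) + a / sqrt r) / sqrt (s - r) \<le> P / sqrt (s - r)"
      unfolding P_def using that rw by (intro divide_right_mono mult_left_mono add_right_mono) auto
    then show ?thesis
      using norm_osc_kernel_le_sqrt_sum[of r s a t] that r a by simp
  qed
  have "1 \<le> w / r" using rw r by simp
  then have "w / r \<le> (w / r)\<^sup>2"
    using mult_right_mono[of 1 "w / r" "w / r"] by (simp add: power2_eq_square)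
  then have "sqrt w / sqrt r \<le> w / r"
    using rw r by (simp add: real_le_lsqrt flip: real_sqrt_divide)
  have "2 * P * sqrt w = 4 * w + 2 * sqrt 2 * a * (sqrt w / sqrt r)"
    using w by (simp add: P_def real_sqrt_mult algebra_simps)
  also have "\<dots> \<le> 4 * w + 4 * w * (a / r)"
  proof -
    have "sqrt 2 * (sqrt w / sqrt r) \<le> 2 * (w / r)"
      using sqrt2 \<open>sqrt w / sqrt r \<le> w / r\<close> w r by (intro mult_mono) auto
    from mult_left_mono[OF this, of "2 * a"] show ?thesis using a by (simp add: algebra_simps)
  qed
  finally have head: "2 * P * sqrt w \<le> 4 * w + 4 * w * (a / r)" .
  have "(w / 2)\<^sup>2 \<le> ((r + w)\<^sup>2 - r\<^sup>2) / 2"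
    using mult_pos_pos[OF r w] by (simp add: power2_eq_square field_simps)
  also have "\<dots> \<le> cosh (r + w) - cosh r"
    using cosh_diff_ge_square_diff[of r "r + w"] r w by simp
  finally have "(w / 2)\<^sup>2 \<le> cosh (r + w) - cosh r" .
  then have "w / 2 \<le> sqrt (cosh (r + w) - cosh r)"
    by (rule real_le_rsqrt)
  then have "4 * t / sqrt (cosh (r + w) - cosh r) \<le> 4 * t / (w / 2)"
    using t w r cosh_diff_pos[of r "r + w"] by (intro divide_left_mono mult_pos_pos) auto
  also have "\<dots> = 8 * (t / sqrt t)" by (simp add: w_def)
  also have "\<dots> = 8 * w" using t by (simp add: w_def real_div_sqrt)
  finally have tail: "4 * t / sqrt (cosh (r + w) - cosh r) \<le> 8 * w" .
  have "norm (integral {r<..} (osc_kernel t a r)) \<le> 2 * P * sqrt w + 4 * t / sqrt (cosh (r + w) - cosh r)"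
    using osc_kernel_integral_greaterThan_le[OF t _ w a near] r by simp
  also have "\<dots> \<le> 12 * w + 4 * (w * (a / r))" using head tail by simp
  also have "\<dots> \<le> 14 * (w * (1 + a / r))"
  proof -
    have "0 \<le> w * (a / r)" using w a r by simp
    moreover have "14 * (w * (1 + a / r)) = 14 * w + 14 * (w * (a / r))" by (simp add: algebra_simps)
    ultimately show ?thesis using w by linarith
  qed
  finally show ?thesis by (simp add: w_def)
qed

theorem lemma5p6:
  shows "\<exists>C>0. \<forall>t a r :: real. t > 0 \<longrightarrow> a \<ge> 0 \<longrightarrow> r > 0 \<longrightarrow>
    norm (integral {r<..} (\<lambda>s. exp (\<i> * complex_of_real ((s + a)\<^sup>2 / (4 * t)))
                               * complex_of_real ((s + a) / sqrt (cosh s - cosh r))))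
    \<le> C * (if r \<ge> sqrt t / 2 then sqrt t * sqrt ((r + a) / sinh r)
            else sqrt t * (1 + a / r))"
proof (intro exI[of _ 14] conjI allI impI)
  fix t a r :: real
  assume "0 < t" "0 \<le> a" "0 < r"
  then show "norm (integral {r<..} (\<lambda>s. exp (\<i> * complex_of_real ((s + a)\<^sup>2 / (4 * t)))
                               * complex_of_real ((s + a) / sqrt (cosh s - cosh r))))
    \<le> 14 * (if r \<ge> sqrt t / 2 then sqrt t * sqrt ((r + a) / sinh r)
            else sqrt t * (1 + a / r))"
    using osc_kernel_integral_le_large_r osc_kernel_integral_le_small_r
    by (simp add: osc_kernel_def[abs_def] not_le)
qed simp

end
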